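(* Let $a \leq b$ be natural numbers. Then \[ \alpha(\{a, a+1, \ldots, b\}) \geq \frac{a}{a+b} = \frac{1}{1 + \frac{b}{a}}. \]
   Context: For a finite $D \subset \mathbb{N} = \{1,2,\ldots\}$ and $n \geq 1$, the circulant graph $G_n$ with set of distances $D$ has vertex set $\{0, \ldots, n-1\}$, vertices $u, v$ (possibly equal) being adjacent iff $u - v \equiv d$ or $v - u \equiv d \pmod n$ for some $d \in D$. $\alpha(G)$ is the maximum size of an independent set (no two adjacent vertices, no looped vertex), and $\alpha(D) := \lim_{n\to\infty} \alpha(G_n)/n$ (which exists). *)

theory Defs
  imports Complex_Main "HOL-Number_Theory.Cong"
begin

text \<open>Independent sets of the circulant graph G_n with set of distances D:
  vertices 0..n-1, u and v (possibly equal) adjacent iff u - v = d or v - u = d (mod n)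
  for some d in D.\<close>
definition circ_indep :: "nat set \<Rightarrow> nat \<Rightarrow> nat set \<Rightarrow> bool" where
  "circ_indep D n S \<longleftrightarrow> S \<subseteq> {..<n} \<and>
     (\<forall>u\<in>S. \<forall>v\<in>S. \<forall>d\<in>D.
        \<not> [int u - int v = int d] (mod int n) \<and> \<not> [int v - int u = int d] (mod int n))"

definition alpha_circ :: "nat set \<Rightarrow> nat \<Rightarrow> nat" where
  "alpha_circ D n = Max (card ` {S. circ_indep D n S})"

text \<open>alpha(D) = lim_{n\<rightarrow>\<infinity>} alpha(G_n)/n (the limit exists).\<close>
definition alpha_dist :: "nat set \<Rightarrow> real" where
  "alpha_dist D = lim (\<lambda>n. real (alpha_circ D n) / real n)"

end

theory Submission
  imports Defs
begin

(* Cut the cycle open: on the path graph with vertices 0..<n the independence number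
   alpha_path is subadditive in n, so by Fekete's lemma alpha_path n / n converges to its
   infimum. Independent sets of G_n are independent on the path of length n, and those on
   the path of length n - max D are independent in G_n (no edge wraps around), so
   alpha_path (n - max D) \<le> alpha_circ n \<le> alpha_path n and alpha(D) is the same limit.
   For D = {a..b} the numbers x with x mod (a + b) < a are independent on the path of
   length k (a + b), since adding d \<in> {a..b} to a residue below a lands in [a, a + b).
   This gives density a / (a + b) along a subsequence. *)

lemma subadditive_mult_add_le:
  fixes u :: "nat \<Rightarrow> real"
  assumes sub: "\<And>m n. u (m + n) \<le> u m + u n"
  shows "u (q * L + r) \<le> q * u L + u r"
proof (induction q)
  case (Suc q)
  have "u (Suc q * L + r) \<le> u L + u (q * L + r)"
    using sub[of L "q * L + r"] by (simp add: add.assoc)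
  with Suc show ?case by (simp add: algebra_simps)
qed simp

lemma subadditive_quotient_le:
  fixes u :: "nat \<Rightarrow> real"
  assumes sub: "\<And>m n. u (m + n) \<le> u m + u n" and nonneg: "\<And>n. 0 \<le> u n"
    and "L \<ge> 1" "n \<ge> 1"
  shows "u n / n \<le> u L / L + (L * u 1 + u 0) / n"
proof -
  have "u (n mod L) \<le> (n mod L) * u 1 + u 0"
    using subadditive_mult_add_le[OF sub, of "n mod L" 1 0] by simp
  also have "\<dots> \<le> L * u 1 + u 0"
    using \<open>L \<ge> 1\<close> nonneg[of 1]
    by (intro add_right_mono mult_right_mono) (simp_all add: less_imp_le)
  finally have rest: "u (n mod L) \<le> L * u 1 + u 0" .
  have "real (n div L) * L * u L \<le> n * u L"
    by (rule mult_right_mono[OF _ nonneg])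
      (metis div_times_less_eq_dividend of_nat_le_iff of_nat_mult)
  then have "real (n div L) * u L \<le> n * (u L / L)"
    using \<open>L \<ge> 1\<close> by (simp add: field_simps)
  moreover have "u n \<le> (n div L) * u L + u (n mod L)"
    using subadditive_mult_add_le[OF sub, of "n div L" L "n mod L"] by simp
  ultimately have "u n \<le> n * (u L / L) + (L * u 1 + u 0)"
    using rest by linarith
  then show ?thesis
    using \<open>n \<ge> 1\<close> by (simp add: field_simps)
qed

lemma subadditive_quotient_tendsto_Inf:
  fixes u :: "nat \<Rightarrow> real"
  assumes sub: "\<And>m n. u (m + n) \<le> u m + u n" and nonneg: "\<And>n. 0 \<le> u n"
  shows "(\<lambda>n. u n / n) \<longlonglongrightarrow> (INF n\<in>{1..}. u n / n)"
proof -
  have bdd: "bdd_below ((\<lambda>n. u n / n) ` {1..})"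
    using nonneg by (intro bdd_belowI[of _ 0]) auto
  show ?thesis
  proof (rule order_tendstoI)
    fix y assume "y < (INF n\<in>{1..}. u n / n)"
    then have "y < u n / n" if "n \<ge> 1" for n
      using cINF_lower[OF bdd, of n] that by simp
    then show "\<forall>\<^sub>F n in sequentially. y < u n / n"
      unfolding eventually_sequentially by blast
  next
    fix y assume "(INF n\<in>{1..}. u n / n) < y"
    then obtain L where L: "L \<ge> 1" "u L / L < y"
      using cINF_less_iff[OF _ bdd] by auto
    have "(\<lambda>n. u L / L + (L * u 1 + u 0) / n) \<longlonglongrightarrow> u L / L + 0"
      by (intro tendsto_intros)
    then have "\<forall>\<^sub>F n in sequentially. u L / L + (L * u 1 + u 0) / n < y"
      using L(2) by (intro order_tendstoD) auto
    with eventually_ge_at_top[of 1] show "\<forall>\<^sub>F n in sequentially. u n / n < y"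
      by eventually_elim (use subadditive_quotient_le[OF sub nonneg L(1)] in fastforce)
  qed
qed

lemma finite_card_image_bounded:
  assumes "finite A" "\<And>S. P S \<Longrightarrow> S \<subseteq> A"
  shows "finite (card ` Collect P)"
proof -
  have "Collect P \<subseteq> Pow A" using assms(2) by blast
  then show ?thesis using assms(1) by (meson finite_Pow_iff finite_imageI finite_subset)
qed

lemma card_le_Max_card:
  assumes "finite A" "\<And>S. P S \<Longrightarrow> S \<subseteq> A" "P S"
  shows "card S \<le> Max (card ` Collect P)"
  using finite_card_image_bounded[OF assms(1,2)] assms(3) by (intro Max_ge) auto

lemma ex_card_eq_Max_card:
  assumes "finite A" "\<And>S. P S \<Longrightarrow> S \<subseteq> A" "P T"
  shows "\<exists>S. P S \<and> card S = Max (card ` Collect P)"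
proof -
  have "Max (card ` Collect P) \<in> card ` Collect P"
    using finite_card_image_bounded[OF assms(1,2)] assms(3) by (intro Max_in) auto
  then show ?thesis by auto
qed

definition path_indep :: "nat set \<Rightarrow> nat \<Rightarrow> nat set \<Rightarrow> bool" where
  "path_indep D n S \<longleftrightarrow> S \<subseteq> {..<n} \<and> (\<forall>u\<in>S. \<forall>v\<in>S. \<forall>d\<in>D. u \<noteq> v + d)"

definition alpha_path :: "nat set \<Rightarrow> nat \<Rightarrow> nat" where
  "alpha_path D n = Max (card ` {S. path_indep D n S})"

lemma card_le_alpha_path: "path_indep D n S \<Longrightarrow> card S \<le> alpha_path D n"
  unfolding alpha_path_def by (rule card_le_Max_card[of "{..<n}"]) (auto simp: path_indep_def)

lemma alpha_path_attained:
  obtains S where "path_indep D n S" "card S = alpha_path D n"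
proof -
  have "\<exists>S. path_indep D n S \<and> card S = alpha_path D n"
    unfolding alpha_path_def
    by (rule ex_card_eq_Max_card[of "{..<n}" _ "{}"]) (auto simp: path_indep_def)
  with that show thesis by blast
qed

lemma alpha_path_add_le: "alpha_path D (m + n) \<le> alpha_path D m + alpha_path D n"
proof -
  obtain S where S: "path_indep D (m + n) S" "card S = alpha_path D (m + n)"
    by (rule alpha_path_attained)
  define low where "low = S \<inter> {..<m}"
  define high where "high = S \<inter> {m..}"
  have "path_indep D m low"
    using S(1) unfolding path_indep_def low_def by auto
  moreover have "path_indep D n ((\<lambda>x. x - m) ` high)"
    unfolding path_indep_def
  proof (intro conjI ballI)
    show "(\<lambda>x. x - m) ` high \<subseteq> {..<n}"
      using S(1) unfolding path_indep_def high_def by auto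
    fix u v d assume "u \<in> (\<lambda>x. x - m) ` high" "v \<in> (\<lambda>x. x - m) ` high" "d \<in> D"
    then obtain x y where "x \<in> S" "y \<in> S" "m \<le> x" "m \<le> y" "u = x - m" "v = y - m"
      unfolding high_def by auto
    then show "u \<noteq> v + d"
      using S(1) \<open>d \<in> D\<close> unfolding path_indep_def by (metis add.assoc le_add_diff_inverse)
  qed
  moreover have "card ((\<lambda>x. x - m) ` high) = card high"
    unfolding high_def by (rule card_image) (auto simp: inj_on_def)
  moreover have "card S \<le> card low + card high"
  proof -
    have "S = low \<union> high" unfolding low_def high_def by auto
    then show ?thesis by (metis card_Un_le)
  qed
  ultimately show ?thesis
    using S(2) card_le_alpha_path by (metis add_mono order_trans)
qed

lemma card_le_alpha_circ: "circ_indep D n S \<Longrightarrow> card S \<le> alpha_circ D n"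
  unfolding alpha_circ_def by (rule card_le_Max_card[of "{..<n}"]) (auto simp: circ_indep_def)

lemma alpha_circ_attained:
  obtains S where "circ_indep D n S" "card S = alpha_circ D n"
proof -
  have "\<exists>S. circ_indep D n S \<and> card S = alpha_circ D n"
    unfolding alpha_circ_def
    by (rule ex_card_eq_Max_card[of "{..<n}" _ "{}"]) (auto simp: circ_indep_def)
  with that show thesis by blast
qed

lemma circ_indep_imp_path_indep: "circ_indep D n S \<Longrightarrow> path_indep D n S"
  unfolding circ_indep_def path_indep_def by fastforce

lemma path_indep_imp_circ_indep:
  assumes S: "path_indep D L S" and D: "\<And>d. d \<in> D \<Longrightarrow> d \<le> M" and n: "L + M \<le> n"
  shows "circ_indep D n S"
proof -
  have no_wrap: "\<not> [int u - int v = int d] (mod int n)" if "u \<in> S" "v \<in> S" "d \<in> D" for u v d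
  proof
    assume "[int u - int v = int d] (mod int n)"
    then have "[int u = int (v + d)] (mod int n)"
      by (simp add: cong_iff_dvd_diff algebra_simps)
    moreover have "u < n" "v + d < n"
      using S D[OF \<open>d \<in> D\<close>] n that unfolding path_indep_def by auto
    ultimately have "int u = int (v + d)"
      by (intro cong_less_imp_eq_int) auto
    then have "u = v + d"
      by (simp only: of_nat_eq_iff)
    then show False
      using S that unfolding path_indep_def by auto
  qed
  then show ?thesis
    using S n unfolding circ_indep_def path_indep_def by auto
qed

lemma alpha_circ_le_alpha_path: "alpha_circ D n \<le> alpha_path D n"
  by (metis alpha_circ_attained card_le_alpha_path circ_indep_imp_path_indep)

lemma alpha_path_le_alpha_circ:
  assumes "\<And>d. d \<in> D \<Longrightarrow> d \<le> M" "L + M \<le> n"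
  shows "alpha_path D L \<le> alpha_circ D n"
  by (metis alpha_path_attained assms card_le_alpha_circ path_indep_imp_circ_indep)

lemma alpha_circ_quotient_tendsto:
  assumes D: "\<And>d. d \<in> D \<Longrightarrow> d \<le> M"
    and path: "(\<lambda>n. real (alpha_path D n) / n) \<longlonglongrightarrow> c"
  shows "(\<lambda>n. real (alpha_circ D n) / n) \<longlonglongrightarrow> c"
proof (rule tendsto_sandwich)
  show "\<forall>\<^sub>F n in sequentially. real (alpha_circ D n) / n \<le> real (alpha_path D n) / n"
    using alpha_circ_le_alpha_path by (intro always_eventually allI divide_right_mono) auto
  have "real (alpha_path D n) - alpha_path D M \<le> alpha_circ D n" if "M \<le> n" for n
  proof -
    have "alpha_path D n \<le> alpha_path D (n - M) + alpha_path D M"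
      using alpha_path_add_le[of D "n - M" M] that by simp
    also have "\<dots> \<le> alpha_circ D n + alpha_path D M"
      using alpha_path_le_alpha_circ[of D M "n - M" n, OF D] that by simp
    finally show ?thesis by linarith
  qed
  then show "\<forall>\<^sub>F n in sequentially.
      real (alpha_path D n) / n - real (alpha_path D M) / n \<le> real (alpha_circ D n) / n"
    unfolding eventually_sequentially diff_divide_distrib[symmetric]
    by (intro exI[of _ M] allI impI divide_right_mono) auto
  have "(\<lambda>n. real (alpha_path D n) / n - real (alpha_path D M) / n) \<longlonglongrightarrow> c - 0"
    by (intro tendsto_intros path)
  then show "(\<lambda>n. real (alpha_path D n) / n - real (alpha_path D M) / n) \<longlonglongrightarrow> c"
    by simp
qed (fact path)

lemma alpha_path_quotient_tendsto_alpha_dist: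
  assumes "finite D"
  shows "(\<lambda>n. real (alpha_path D n) / n) \<longlonglongrightarrow> alpha_dist D"
proof -
  obtain M where M: "\<And>d. d \<in> D \<Longrightarrow> d \<le> M"
    using assms unfolding finite_nat_set_iff_bounded_le by blast
  have path: "(\<lambda>n. real (alpha_path D n) / n) \<longlonglongrightarrow> (INF n\<in>{1..}. real (alpha_path D n) / n)"
    by (rule subadditive_quotient_tendsto_Inf) (simp_all flip: of_nat_add add: alpha_path_add_le)
  moreover have "alpha_dist D = (INF n\<in>{1..}. real (alpha_path D n) / n)"
    unfolding alpha_dist_def by (rule limI, rule alpha_circ_quotient_tendsto[OF M path])
  ultimately show ?thesis by simp
qed

lemma card_mod_less:
  fixes a m k :: nat
  assumes "a \<le> m"
  shows "card {x. x < k * m \<and> x mod m < a} = k * a"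
proof (cases "m = 0")
  case False
  have "bij_betw (\<lambda>x. (x div m, x mod m)) {x. x < k * m \<and> x mod m < a} ({..<k} \<times> {..<a})"
  proof (rule bij_betw_byWitness[where f' = "\<lambda>(q, r). q * m + r"])
    have "q * m + r < k * m" if "q < k" "r < m" for q r
    proof -
      have "q * m + r < Suc q * m" using that by simp
      also have "\<dots> \<le> k * m" using that by (intro mult_right_mono) auto
      finally show ?thesis .
    qed
    then show "(\<lambda>(q, r). q * m + r) ` ({..<k} \<times> {..<a}) \<subseteq> {x. x < k * m \<and> x mod m < a}"
      using assms by auto
  qed (use False assms in \<open>auto simp: div_less_iff_less_mult\<close>)
  then show ?thesis
    by (simp add: bij_betw_same_card card_cartesian_product)
qed (use assms in simp)

lemma path_indep_mod_less:
  fixes a b k :: nat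
  defines "m \<equiv> a + b"
  shows "path_indep {a..b} (k * m) {x. x < k * m \<and> x mod m < a}"
  unfolding path_indep_def
proof (intro conjI ballI)
  fix u v d assume "u \<in> {x. x < k * m \<and> x mod m < a}" "v \<in> {x. x < k * m \<and> x mod m < a}"
    and d: "d \<in> {a..b}"
  then have u: "u mod m < a" and v: "v mod m < a" by auto
  have "(v + d) mod m = (v mod m + d) mod m"
    by (simp add: mod_add_left_eq)
  also have "\<dots> = v mod m + d"
    using v d by (intro mod_less) (simp add: m_def)
  finally have "a \<le> (v + d) mod m"
    using d by simp
  with u show "u \<noteq> v + d" by auto
qed auto

lemma alpha_path_interval_ge: "k * a \<le> alpha_path {a..b} (k * (a + b))"
  using card_le_alpha_path[OF path_indep_mod_less[of a b k]] card_mod_less[of a "a + b" k] by simp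

theorem proposition3:
  fixes a b :: nat
  assumes "1 \<le> a" and "a \<le> b"
  shows "alpha_dist {a..b} \<ge> real a / real (a + b)"
proof -
  let ?q = "\<lambda>n. real (alpha_path {a..b} n) / n"
  let ?period = "\<lambda>k. Suc k * (a + b)"
  have "strict_mono ?period"
    using assms by (intro strict_monoI) simp
  then have "(?q \<circ> ?period) \<longlonglongrightarrow> alpha_dist {a..b}"
    using alpha_path_quotient_tendsto_alpha_dist[of "{a..b}"] by (simp add: LIMSEQ_subseq_LIMSEQ)
  moreover have "real a / real (a + b) \<le> (?q \<circ> ?period) k" for k
  proof -
    have "real a / real (a + b) = real (Suc k * a) / real (?period k)"
      by (simp only: of_nat_mult mult_divide_mult_cancel_left of_nat_Suc)
    also have "\<dots> \<le> ?q (?period k)"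
      by (intro divide_right_mono) (simp_all only: of_nat_le_iff alpha_path_interval_ge of_nat_0_le_iff)
    finally show ?thesis by simp
  qed
  ultimately show ?thesis
    by (intro LIMSEQ_le_const) auto
qed

end
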